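(* Let $P=(p_{ij})$ be the transition matrix of an absorbing Markov chain on states $1,\dots,s$, where states $1,\dots,r$ are transient and states $r+1,\dots,s$ are absorbing. Assume all transition probabilities are rational and, for each transient state $i$, write $p_{ij}=r_{ij}/r_i$ with $r_i$ a positive integer and $r_{ij}$ nonnegative integers (so $\sum_{j=1}^s r_{ij}=r_i$). Fix a transient state $u$ and run the chip-moving procedure (Engel's algorithm) described below, starting from the critical loading. Then: (a) the procedure terminates, i.e. after finitely many moves the critical loading on the transient states recurs (whatever order is used for the available type 1 moves); (b) at termination, let $w_{uj}$ (for transient $j$) be the total number of chips moved out of state $j$ during the whole run (i.e. $r_j$ times the number of type 1 moves made at $j$), let $v_{uk}$ (for absorbing $k$) be the total number of chips moved into state $k$ during the run, and let $v_u=\sum_{k=r+1}^{s} v_{uk}$. Then $v_u>0$ and, for every transient state $j$ and every absorbing state $k$, \[ N_{uj}=\frac{w_{uj}}{v_u},\qquad B_{uk}=\frac{v_{uk}}{v_u}, \] where $N_{uj}$ is the expected number of visits (counting time $0$) to state $j$ for the chain started at $u$, and $B_{uk}$ is the probability that the chain started at $u$ is eventually absorbed in state $k$. Equivalently, writing $Q=(p_{ij})_{1\le i,j\le r}$ and $R=(p_{ik})_{1\le i\le r<k\le s}$, $N=(I-Q)^{-1}$ and $B=NR$.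
   Context: An absorbing Markov chain is a finite Markov chain in which absorbing states (states $j$ with $p_{jj}=1$) exist and from every state some absorbing state can be reached; the non-absorbing states are transient. Chip-moving procedure. A configuration is an assignment of a nonnegative integer number of chips to each state $1,\dots,s$. Two kinds of moves are allowed: - Type 1 move at a transient state $i$: allowed only if state $i$ holds at least $r_i$ chips; it removes $r_i$ chips from $i$ and sends $r_{ij}$ of them to state $j$ for each $j=1,\dots,s$. - Type 2 move: add one new chip to state $u$; allowed only when no type 1 move is possible. The critical loading (for $u$) is the configuration with $r_i-1$ chips on each transient state $i\ne u$, $r_u$ chips on $u$, and $0$ chips on every absorbing state. The procedure starts from the critical loading and repeats the following round: perform type 1 moves as long as any is possible; when none is possible, perform type 2 moves until state $u$ holds exactly $r_u$ chips; then, if the numbers of chips on the transient states $1,\dots,r$ coincide with the critical loading ($r_i-1$ on $i\ne u$, $r_u$ on $u$), stop; otherwise start another round. *)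

theory Defs
  imports Complex_Main
begin

text \<open>A chip state of the procedure is a triple (c, m, b): c j = chips on state j,
  m i = number of type 1 moves performed so far at state i,
  b = whether the most recent move was a type 2 move.\<close>

type_synonym chipstate = "(nat \<Rightarrow> nat) \<times> (nat \<Rightarrow> nat) \<times> bool"

fun matpow :: "nat \<Rightarrow> (nat \<Rightarrow> nat \<Rightarrow> real) \<Rightarrow> nat \<Rightarrow> nat \<Rightarrow> nat \<Rightarrow> real" where
  "matpow s P 0 i j = (if i = j then 1 else 0)"
| "matpow s P (Suc n) i j = (\<Sum>l=1..s. matpow s P n i l * P l j)"

definition edge :: "nat \<Rightarrow> (nat \<Rightarrow> nat \<Rightarrow> real) \<Rightarrow> (nat \<times> nat) set" where
  "edge s P = {(a, b). a \<in> {1..s} \<and> b \<in> {1..s} \<and> P a b > 0}"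

definition absorbing_chain :: "nat \<Rightarrow> nat \<Rightarrow> (nat \<Rightarrow> nat \<Rightarrow> real) \<Rightarrow> bool" where
  "absorbing_chain s r P \<longleftrightarrow>
     r \<le> s \<and>
     (\<forall>i\<in>{1..s}. \<forall>j\<in>{1..s}. 0 \<le> P i j) \<and>
     (\<forall>i\<in>{1..s}. (\<Sum>j=1..s. P i j) = 1) \<and>
     (\<forall>k\<in>{r+1..s}. P k k = 1) \<and>
     (\<forall>i\<in>{1..r}. P i i \<noteq> 1) \<and>
     (\<forall>i\<in>{1..s}. \<exists>k\<in>{r+1..s}. (i, k) \<in> (edge s P)\<^sup>*)"

definition critical_on_transient :: "nat \<Rightarrow> (nat \<Rightarrow> nat) \<Rightarrow> nat \<Rightarrow> (nat \<Rightarrow> nat) \<Rightarrow> bool" where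
  "critical_on_transient r rv u c \<longleftrightarrow>
     (\<forall>i\<in>{1..r}. c i = (if i = u then rv i else rv i - 1))"

definition critical_loading :: "nat \<Rightarrow> (nat \<Rightarrow> nat) \<Rightarrow> nat \<Rightarrow> nat \<Rightarrow> nat" where
  "critical_loading r rv u = (\<lambda>i. if i \<in> {1..r} then (if i = u then rv i else rv i - 1) else 0)"

definition init_state :: "nat \<Rightarrow> (nat \<Rightarrow> nat) \<Rightarrow> nat \<Rightarrow> chipstate" where
  "init_state r rv u = (critical_loading r rv u, \<lambda>_. 0, False)"

text \<open>The procedure stops right after a type 2 phase that restores the critical loading
  on the transient states (critical loading forces exactly r_u chips on u, i.e. the
  type 2 phase is complete).\<close>
definition stopped :: "nat \<Rightarrow> (nat \<Rightarrow> nat) \<Rightarrow> nat \<Rightarrow> chipstate \<Rightarrow> bool" where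
  "stopped r rv u \<sigma> \<longleftrightarrow> (case \<sigma> of (c, m, b) \<Rightarrow> b \<and> critical_on_transient r rv u c)"

definition move1 :: "nat \<Rightarrow> nat \<Rightarrow> (nat \<Rightarrow> nat) \<Rightarrow> (nat \<Rightarrow> nat \<Rightarrow> nat) \<Rightarrow> nat
                     \<Rightarrow> chipstate \<Rightarrow> chipstate \<Rightarrow> bool" where
  "move1 s r rv rm i \<sigma> \<sigma>' \<longleftrightarrow> (case \<sigma> of (c, m, b) \<Rightarrow>
     i \<in> {1..r} \<and> rv i \<le> c i \<and>
     \<sigma>' = ((\<lambda>j. c j - (if j = i then rv i else 0) + (if j \<in> {1..s} then rm i j else 0)),
           m(i := m i + 1), False))"

definition move2 :: "nat \<Rightarrow> (nat \<Rightarrow> nat) \<Rightarrow> nat \<Rightarrow> chipstate \<Rightarrow> chipstate \<Rightarrow> bool" where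
  "move2 r rv u \<sigma> \<sigma>' \<longleftrightarrow> (case \<sigma> of (c, m, b) \<Rightarrow>
     (\<forall>i\<in>{1..r}. c i < rv i) \<and> \<sigma>' = (c(u := c u + 1), m, True))"

definition engel_step :: "nat \<Rightarrow> nat \<Rightarrow> (nat \<Rightarrow> nat) \<Rightarrow> (nat \<Rightarrow> nat \<Rightarrow> nat) \<Rightarrow> nat
                          \<Rightarrow> chipstate \<Rightarrow> chipstate \<Rightarrow> bool" where
  "engel_step s r rv rm u \<sigma> \<sigma>' \<longleftrightarrow> \<not> stopped r rv u \<sigma> \<and>
     ((\<exists>i. move1 s r rv rm i \<sigma> \<sigma>') \<or> move2 r rv u \<sigma> \<sigma>')"

definition chips_into :: "nat \<Rightarrow> (nat \<Rightarrow> nat \<Rightarrow> nat) \<Rightarrow> (nat \<Rightarrow> nat) \<Rightarrow> nat \<Rightarrow> nat" where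
  "chips_into r rm m k = (\<Sum>i=1..r. m i * rm i k)"

end

theory Submission
  imports Defs
begin

text \<open>Along a run, c_j + r_j m_j - \<Sum>_k m_k r_kj (chips present at the transient state j
  plus the net outflow caused by the m_k type 1 moves made at each k) is constant for j \<noteq> u,
  and at u it grows by the number of chips added by type 2 moves. When the critical loading recurs
  after v additions, m therefore solves the balance equations
  r_j m_j - \<Sum>_k m_k r_kj = [j = u] v, and summing them shows that v is the number of chips
  absorbed. Thus w_j = r_j m_j / v is a nonnegative solution of w = e_u + w Q, and such a solution
  is row u of N = (I - Q)^-1: the defect w - \<Sum>_{n<N} e_u Q^n is nonnegative and decreasing,
  and its limit L satisfies L = L Q, which forces L = 0 because the support of a nonnegative L \<le> L Q
  is closed under transitions, whereas every state reaches an absorbing one.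

  For termination, the transient loads are bounded, so an infinite run repeats them, and the
  moves in between yield an integral solution x of the balance equations with some t \<ge> 1 in
  place of v. A run from the critical loading can never make more than x_i moves at any i, and
  it stops when its t-th chip is added; so it is finite.\<close>

lemma bounded_sequence_repeats:
  fixes C :: "nat \<Rightarrow> 'a \<Rightarrow> nat"
  assumes "finite A" and bounded: "\<And>n j. j \<in> A \<Longrightarrow> C n j \<le> B"
  obtains p q where "p < q" and "\<forall>j\<in>A. C p j = C q j"
proof -
  define g where "g n = (\<lambda>j. if j \<in> A then C n j else 0)" for n
  have "range g \<subseteq> {f. \<forall>j. (j \<in> A \<longrightarrow> f j \<in> {..B}) \<and> (j \<notin> A \<longrightarrow> f j = 0)}"
    using bounded unfolding g_def by auto
  then have "finite (range g)"
    using finite_set_of_finite_funs[OF \<open>finite A\<close>, of "{..B}" 0] by (auto intro: finite_subset)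
  then have "\<not> inj g" using finite_imageD infinite_UNIV_nat by blast
  then obtain p q where "p \<noteq> q" "g p = g q" unfolding inj_def by blast
  then have "min p q < max p q" "\<forall>j\<in>A. C (min p q) j = C (max p q) j"
    unfolding g_def by (auto simp: fun_eq_iff min_def max_def split: if_splits)
  then show ?thesis using that by blast
qed

locale absorbing_markov_chain =
  fixes s r :: nat and P :: "nat \<Rightarrow> nat \<Rightarrow> real"
  assumes absorbing: "absorbing_chain s r P"
begin

lemma transient_le_states: "r \<le> s"
  using absorbing unfolding absorbing_chain_def by auto

lemma transition_nonneg: "i \<in> {1..s} \<Longrightarrow> j \<in> {1..s} \<Longrightarrow> 0 \<le> P i j"
  using absorbing unfolding absorbing_chain_def by auto

lemma row_sum_eq_1: "i \<in> {1..s} \<Longrightarrow> (\<Sum>j=1..s. P i j) = 1"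
  using absorbing unfolding absorbing_chain_def by auto

lemma sum_states_split:
  "(\<Sum>j=1..s. f j) = (\<Sum>j=1..r. f j) + (\<Sum>j=r+1..s. f j :: 'a::comm_monoid_add)"
proof -
  have "{1..s} = {1..r} \<union> {r+1..s}" using transient_le_states by auto
  then show ?thesis by (simp add: sum.union_disjoint)
qed

lemma absorbing_row:
  assumes k: "k \<in> {r+1..s}" and j: "j \<in> {1..s}"
  shows "P k j = (if j = k then 1 else 0)"
proof -
  have ks: "k \<in> {1..s}" using k by auto
  have Pkk: "P k k = 1" using absorbing k unfolding absorbing_chain_def by auto
  have "(\<Sum>l\<in>{1..s}-{k}. P k l) = 0"
    using row_sum_eq_1[OF ks] ks Pkk by (simp add: sum.remove)
  then have "\<forall>l\<in>{1..s}-{k}. P k l = 0"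
    using transition_nonneg ks by (subst (asm) sum_nonneg_eq_0_iff) auto
  then show ?thesis using j Pkk by auto
qed

lemma transient_row_sum_le_1: "k \<in> {1..r} \<Longrightarrow> (\<Sum>j=1..r. P k j) \<le> 1"
  using row_sum_eq_1[of k] sum_states_split[of "P k"] transient_le_states
    sum_nonneg[of "{r+1..s}" "P k"] transition_nonneg[of k] by force

lemma subinvariant_support_closed:
  assumes nonneg: "\<forall>j\<in>{1..r}. 0 \<le> y j"
    and sub: "\<forall>j\<in>{1..r}. y j \<le> (\<Sum>k=1..r. y k * P k j)"
    and k: "k \<in> {1..r}" "0 < y k" and edge: "(k, j) \<in> edge s P"
  shows "j \<in> {1..r} \<and> 0 < y j"
proof -
  define T where "T = {1..r}"
  define gain where "gain j = (\<Sum>k\<in>T. y k * P k j) - y j" for j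
  define loss where "loss k = y k * (1 - (\<Sum>j\<in>T. P k j))" for k
  \<comment> \<open>Summing the subinvariance over T shows that no mass is lost: both the inequalities
    and the substochastic row sums are tight on the support of y.\<close>
  have "(\<Sum>j\<in>T. \<Sum>k\<in>T. y k * P k j) = (\<Sum>k\<in>T. y k * (\<Sum>j\<in>T. P k j))"
    by (subst sum.swap) (simp add: sum_distrib_left)
  then have balance: "sum gain T + sum loss T = 0"
    unfolding gain_def loss_def by (simp add: sum_subtractf right_diff_distrib)
  have gain_nonneg: "\<forall>j\<in>T. 0 \<le> gain j"
    using sub unfolding T_def gain_def by auto
  have loss_nonneg: "\<forall>k\<in>T. 0 \<le> loss k"
    using nonneg transient_row_sum_le_1 unfolding T_def loss_def by auto
  have "sum gain T = 0" "sum loss T = 0"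
    using balance sum_nonneg[of T gain] sum_nonneg[of T loss] gain_nonneg loss_nonneg by auto
  moreover have "finite T" unfolding T_def by simp
  ultimately have tight: "\<forall>j\<in>T. gain j = 0" "\<forall>k\<in>T. loss k = 0"
    using gain_nonneg loss_nonneg sum_nonneg_eq_0_iff by blast+
  have ks: "k \<in> {1..s}" using k transient_le_states by auto
  have js: "j \<in> {1..s}" and Pkj: "0 < P k j" using edge unfolding edge_def by auto
  have "(\<Sum>j\<in>T. P k j) = 1" using tight(2) k unfolding loss_def T_def by force
  then have "(\<Sum>j=r+1..s. P k j) = 0"
    using row_sum_eq_1[OF ks] sum_states_split[of "P k"] unfolding T_def by simp
  then have "\<forall>j\<in>{r+1..s}. P k j = 0"
    using transition_nonneg ks by (subst (asm) sum_nonneg_eq_0_iff) auto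
  then have jT: "j \<in> T" using js Pkj unfolding T_def by (cases "j \<le> r") auto
  have "y k * P k j \<le> (\<Sum>l\<in>T. y l * P l j)"
    using k nonneg transition_nonneg js transient_le_states unfolding T_def
    by (intro member_le_sum) auto
  also have "\<dots> = y j" using tight(1) jT unfolding gain_def by simp
  finally have "0 < y j" using k Pkj by (meson mult_pos_pos order_less_le_trans)
  then show ?thesis using jT unfolding T_def by simp
qed

lemma subinvariant_eq_0:
  assumes nonneg: "\<forall>j\<in>{1..r}. 0 \<le> y j"
    and sub: "\<forall>j\<in>{1..r}. y j \<le> (\<Sum>k=1..r. y k * P k j)"
  shows "\<forall>j\<in>{1..r}. y j = 0"
proof (rule ccontr)
  assume "\<not> (\<forall>j\<in>{1..r}. y j = 0)"
  then obtain k where k: "k \<in> {1..r}" "0 < y k" using nonneg by force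
  have support: "j \<in> {1..r} \<and> 0 < y j" if "(k, j) \<in> (edge s P)\<^sup>*" for j
    using that
  proof induction
    case (step j l)
    then show ?case using subinvariant_support_closed[OF nonneg sub] by blast
  qed (use k in simp)
  have "\<forall>i\<in>{1..s}. \<exists>a\<in>{r+1..s}. (i, a) \<in> (edge s P)\<^sup>*"
    using absorbing unfolding absorbing_chain_def by blast
  then obtain a where "a \<in> {r+1..s}" "(k, a) \<in> (edge s P)\<^sup>*"
    using k transient_le_states by force
  then show False using support[of a] by simp
qed

lemma matpow_nonneg: "j \<in> {1..s} \<Longrightarrow> 0 \<le> matpow s P n i j"
proof (induction n arbitrary: j)
  case (Suc n)
  then show ?case by (auto intro!: sum_nonneg mult_nonneg_nonneg transition_nonneg)
qed simp

lemma matpow_Suc_transient: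
  assumes j: "j \<in> {1..r}"
  shows "matpow s P (Suc n) i j = (\<Sum>l=1..r. matpow s P n i l * P l j)"
proof -
  have "j \<in> {1..s}" using j transient_le_states by auto
  then have "(\<Sum>l=r+1..s. matpow s P n i l * P l j) = 0"
    using absorbing_row j by (intro sum.neutral) auto
  then show ?thesis using sum_states_split[of "\<lambda>l. matpow s P n i l * P l j"] by simp
qed

lemma matpow_Suc_absorbing:
  assumes k: "k \<in> {r+1..s}"
  shows "matpow s P (Suc n) i k = matpow s P n i k + (\<Sum>l=1..r. matpow s P n i l * P l k)"
proof -
  have "(\<Sum>l=r+1..s. matpow s P n i l * P l k) = (\<Sum>l=r+1..s. if l = k then matpow s P n i k else 0)"
    using absorbing_row k by (intro sum.cong) auto
  also have "\<dots> = matpow s P n i k" using k by simp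
  finally show ?thesis using sum_states_split[of "\<lambda>l. matpow s P n i l * P l k"] by simp
qed

lemma nonneg_decreasing_orbit_tendsto_0:
  assumes nonneg: "\<And>N j. j \<in> {1..r} \<Longrightarrow> 0 \<le> z N j"
    and decreasing: "\<And>N j. j \<in> {1..r} \<Longrightarrow> z (Suc N) j \<le> z N j"
    and orbit: "\<And>N j. j \<in> {1..r} \<Longrightarrow> z (Suc N) j = (\<Sum>k=1..r. z N k * P k j)"
    and j: "j \<in> {1..r}"
  shows "(\<lambda>N. z N j) \<longlonglongrightarrow> 0"
proof -
  have "\<exists>L. (\<lambda>N. z N j) \<longlonglongrightarrow> L" if "j \<in> {1..r}" for j
  proof -
    have "decseq (\<lambda>N. z N j)" using decreasing that by (intro decseq_SucI)
    then show ?thesis using decseq_convergent[of _ 0] nonneg that by metis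
  qed
  then obtain L where L: "\<And>j. j \<in> {1..r} \<Longrightarrow> (\<lambda>N. z N j) \<longlonglongrightarrow> L j" by metis
  have "\<forall>j\<in>{1..r}. L j = 0"
  proof (rule subinvariant_eq_0)
    show "\<forall>j\<in>{1..r}. 0 \<le> L j"
      using L nonneg by (blast intro: LIMSEQ_le_const)
    show "\<forall>j\<in>{1..r}. L j \<le> (\<Sum>k=1..r. L k * P k j)"
    proof
      fix j assume j: "j \<in> {1..r}"
      have "(\<lambda>N. z (Suc N) j) \<longlonglongrightarrow> (\<Sum>k=1..r. L k * P k j)"
        unfolding orbit[OF j] by (intro tendsto_intros L) simp
      then show "L j \<le> (\<Sum>k=1..r. L k * P k j)"
        using LIMSEQ_unique[OF LIMSEQ_Suc[OF L[OF j]]] by simp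
    qed
  qed
  then show ?thesis using L j by force
qed

lemma expected_visits_sums:
  assumes nonneg: "\<forall>j\<in>{1..r}. 0 \<le> w j"
    and eq: "\<forall>j\<in>{1..r}. w j = (if j = u then 1 else 0) + (\<Sum>k=1..r. w k * P k j)"
    and j: "j \<in> {1..r}"
  shows "(\<lambda>n. matpow s P n u j) sums w j"
proof -
  define z where "z N j = w j - (\<Sum>n<N. matpow s P n u j)" for N j
  have orbit: "z (Suc N) j = (\<Sum>k=1..r. z N k * P k j)" if j: "j \<in> {1..r}" for N j
  proof -
    have "(\<Sum>k=1..r. (\<Sum>n<N. matpow s P n u k) * P k j) = (\<Sum>n<N. \<Sum>k=1..r. matpow s P n u k * P k j)"
      by (simp add: sum_distrib_right) (rule sum.swap)
    also have "\<dots> = (\<Sum>n<N. matpow s P (Suc n) u j)"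
      using matpow_Suc_transient[OF j] by simp
    also have "\<dots> = (\<Sum>n<Suc N. matpow s P n u j) - (if j = u then 1 else 0)"
      by (simp only: sum.lessThan_Suc_shift) simp
    finally show ?thesis
      using eq j unfolding z_def by (simp add: left_diff_distrib sum_subtractf)
  qed
  have z_nonneg: "0 \<le> z N j" if "j \<in> {1..r}" for N j
    using that
  proof (induction N arbitrary: j)
    case 0 then show ?case using nonneg unfolding z_def by simp
  next
    case (Suc N)
    then show ?case using transient_le_states
      by (auto simp: orbit intro!: sum_nonneg mult_nonneg_nonneg transition_nonneg)
  qed
  have "z (Suc N) j \<le> z N j" if "j \<in> {1..r}" for N j
    using matpow_nonneg[of j] that transient_le_states unfolding z_def by simp
  then have "(\<lambda>N. z N j) \<longlonglongrightarrow> 0"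
    using nonneg_decreasing_orbit_tendsto_0 z_nonneg orbit j by blast
  then have "(\<lambda>N. w j - z N j) \<longlonglongrightarrow> w j - 0" by (intro tendsto_intros)
  then show ?thesis unfolding sums_def z_def by simp
qed

lemma absorption_tendsto:
  assumes u: "u \<in> {1..r}" and k: "k \<in> {r+1..s}"
    and visits: "\<forall>j\<in>{1..r}. (\<lambda>n. matpow s P n u j) sums w j"
  shows "(\<lambda>n. matpow s P n u k) \<longlonglongrightarrow> (\<Sum>l=1..r. w l * P l k)"
proof -
  have "(\<lambda>n. \<Sum>l=1..r. matpow s P n u l * P l k) sums (\<Sum>l=1..r. w l * P l k)"
    using visits by (intro sums_sum sums_mult2) auto
  moreover have "matpow s P N u k = (\<Sum>n<N. \<Sum>l=1..r. matpow s P n u l * P l k)" for N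
  proof -
    have "matpow s P 0 u k = 0" using u k by auto
    then show ?thesis
      using sum_lessThan_telescope[of "\<lambda>n. matpow s P n u k" N] matpow_Suc_absorbing[OF k] by simp
  qed
  ultimately show ?thesis unfolding sums_def by simp
qed

end

locale engel_procedure = absorbing_markov_chain +
  fixes rv :: "nat \<Rightarrow> nat" and rm :: "nat \<Rightarrow> nat \<Rightarrow> nat" and u :: nat
  assumes rational: "\<forall>i\<in>{1..r}. 0 < rv i \<and> (\<forall>j\<in>{1..s}. P i j = real (rm i j) / real (rv i))"
    and start: "u \<in> {1..r}"
begin

lemma rv_pos: "i \<in> {1..r} \<Longrightarrow> 0 < rv i"
  using rational by auto

lemma transition_eq: "i \<in> {1..r} \<Longrightarrow> j \<in> {1..s} \<Longrightarrow> P i j = real (rm i j) / real (rv i)"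
  using rational by auto

lemma rm_row_sum: assumes i: "i \<in> {1..r}" shows "(\<Sum>j=1..s. rm i j) = rv i"
proof -
  have "i \<in> {1..s}" using i transient_le_states by auto
  then have "1 = (\<Sum>j=1..s. P i j)" using row_sum_eq_1 by simp
  also have "\<dots> = (\<Sum>j=1..s. real (rm i j) / real (rv i))"
    using transition_eq[OF i] by (intro sum.cong) auto
  finally have "1 = (\<Sum>j=1..s. real (rm i j) / real (rv i))" .
  then have "real (rv i) = real (\<Sum>j=1..s. rm i j)"
    using rv_pos[OF i] by (simp add: sum_divide_distrib[symmetric])
  then show ?thesis by linarith
qed

definition net_outflow :: "(nat \<Rightarrow> nat) \<Rightarrow> nat \<Rightarrow> int" where
  "net_outflow m j = int (rv j) * int (m j) - (\<Sum>k=1..r. int (m k) * int (rm k j))"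

lemma net_outflow_diff:
  assumes "\<forall>k\<in>{1..r}. m k \<le> x k" and "j \<in> {1..r}"
  shows "net_outflow (\<lambda>k. x k - m k) j = net_outflow x j - net_outflow m j"
proof -
  have "(\<Sum>k=1..r. int (x k - m k) * int (rm k j))
      = (\<Sum>k=1..r. int (x k) * int (rm k j)) - (\<Sum>k=1..r. int (m k) * int (rm k j))"
    using assms by (simp add: of_nat_diff left_diff_distrib sum_subtractf[symmetric])
  then show ?thesis
    using assms unfolding net_outflow_def by (auto simp: of_nat_diff algebra_simps)
qed

lemma net_outflow_fire:
  assumes i: "i \<in> {1..r}"
  shows "net_outflow (m(i := Suc (m i))) j
    = net_outflow m j + (if j = i then int (rv i) else 0) - int (rm i j)"
proof -
  have "(\<Sum>k=1..r. int ((m(i := Suc (m i))) k) * int (rm k j))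
      = (\<Sum>k=1..r. int (m k) * int (rm k j) + (if k = i then int (rm k j) else 0))"
    by (intro sum.cong) (auto simp: algebra_simps)
  then show ?thesis using i unfolding net_outflow_def by (simp add: sum.distrib algebra_simps)
qed

lemma net_outflow_nonpos_eq_0:
  assumes "\<forall>j\<in>{1..r}. net_outflow y j \<le> 0"
  shows "\<forall>j\<in>{1..r}. y j = 0"
proof -
  have weighted: "real (y k) * real (rm k j) = real (rv k) * real (y k) * P k j"
    if "k \<in> {1..r}" "j \<in> {1..s}" for k j
    using transition_eq[OF that] rv_pos[OF that(1)] by simp
  have "\<forall>j\<in>{1..r}. real (rv j) * real (y j) = 0"
  proof (rule subinvariant_eq_0, simp, intro ballI)
    fix j assume j: "j \<in> {1..r}"
    have "real_of_int (int (rv j) * int (y j)) \<le> real_of_int (\<Sum>k=1..r. int (y k) * int (rm k j))"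
      using assms j unfolding net_outflow_def by (simp only: of_int_le_iff) simp
    also have "\<dots> = (\<Sum>k=1..r. real (rv k) * real (y k) * P k j)"
      using weighted j transient_le_states by (auto intro: sum.cong)
    finally show "real (rv j) * real (y j) \<le> (\<Sum>k=1..r. real (rv k) * real (y k) * P k j)" by simp
  qed
  then show ?thesis using rv_pos by fastforce
qed

lemma sum_net_outflow:
  "(\<Sum>j=1..r. net_outflow m j) = int (\<Sum>k=r+1..s. chips_into r rm m k)"
proof -
  have "(\<Sum>j=1..r. int (rm k j)) = int (rv k) - (\<Sum>j=r+1..s. int (rm k j))" if "k \<in> {1..r}" for k
    using rm_row_sum[OF that] sum_states_split[of "\<lambda>j. int (rm k j)"] by (simp flip: of_nat_sum)
  then have "(\<Sum>j=1..r. \<Sum>k=1..r. int (m k) * int (rm k j))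
      = (\<Sum>k=1..r. int (m k) * (int (rv k) - (\<Sum>j=r+1..s. int (rm k j))))"
    by (subst sum.swap) (simp add: sum_distrib_left[symmetric])
  moreover have "int (\<Sum>k=r+1..s. chips_into r rm m k) = (\<Sum>k=1..r. int (m k) * (\<Sum>j=r+1..s. int (rm k j)))"
    unfolding chips_into_def by (simp add: sum_distrib_left) (rule sum.swap)
  ultimately show ?thesis
    unfolding net_outflow_def by (simp add: sum_subtractf right_diff_distrib mult.commute)
qed

abbreviation step :: "chipstate \<Rightarrow> chipstate \<Rightarrow> bool" where
  "step \<equiv> engel_step s r rv rm u"

abbreviation reachable :: "chipstate \<Rightarrow> bool" where
  "reachable \<equiv> step\<^sup>*\<^sup>* (init_state r rv u)"

text \<open>Chips supplied by type 2 moves: the current load of u plus its net outflow exceeds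
  the initial r_u chips by exactly that number.\<close>
fun added_chips :: "chipstate \<Rightarrow> int" where
  "added_chips (c, m, b) = int (c u) + net_outflow m u - int (rv u)"

fun move_count :: "chipstate \<Rightarrow> int" where
  "move_count (c, m, b) = added_chips (c, m, b) + (\<Sum>i=1..r. int (m i))"

lemma reachable_induct [consumes 1, case_names init step]:
  assumes "reachable \<sigma>" and "I (init_state r rv u)"
    and "\<And>c m b c' m' b'. reachable (c, m, b) \<Longrightarrow> step (c, m, b) (c', m', b') \<Longrightarrow> I (c, m, b)
      \<Longrightarrow> I (c', m', b')"
  shows "I \<sigma>"
  using assms(1)
proof (induction rule: rtranclp_induct)
  case (step \<sigma> \<sigma>')
  then show ?case using assms(3) by (cases \<sigma>, cases \<sigma>') auto
qed (rule assms(2))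

lemma critical_loading_start: "critical_loading r rv u u = rv u"
  using start unfolding critical_loading_def by simp

lemma added_chips_init: "added_chips (init_state r rv u) = 0"
  by (simp add: init_state_def net_outflow_def critical_loading_start)

lemma move1_balance:
  assumes "move1 s r rv rm i (c, m, b) (c', m', b')" and j: "j \<in> {1..r}"
  shows "int (c' j) + net_outflow m' j = int (c j) + net_outflow m j"
  using assms transient_le_states unfolding move1_def by (auto simp: net_outflow_fire of_nat_diff)

lemma move2_balance:
  assumes "move2 r rv u (c, m, b) (c', m', b')"
  shows "int (c' j) + net_outflow m' j = int (c j) + net_outflow m j + (if j = u then 1 else 0)"
  using assms unfolding move2_def by auto

lemma engel_step_effect:
  assumes "step (c, m, b) (c', m', b')"
  shows "(\<exists>i\<in>{1..r}. m' = m(i := m i + 1) \<and> \<not> b' \<and> added_chips (c', m', b') = added_chips (c, m, b))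
    \<or> (m' = m \<and> b' \<and> added_chips (c', m', b') = added_chips (c, m, b) + 1)"
  using assms start move1_balance[of _ c m b c' m' b' u] move2_balance[of c m b c' m' b' u]
  unfolding engel_step_def by (auto simp: move1_def move2_def)

lemma engel_step_firings_mono: "step (c, m, b) (c', m', b') \<Longrightarrow> m \<le> m'"
  using engel_step_effect by (fastforce simp: le_fun_def)

lemma sum_fun_upd_Suc:
  "i \<in> {1..r} \<Longrightarrow> (\<Sum>k=1..r. int ((m(i := Suc (m i))) k)) = (\<Sum>k=1..r. int (m k)) + 1"
proof -
  assume i: "i \<in> {1..r}"
  have "(\<Sum>k=1..r. int ((m(i := Suc (m i))) k)) = (\<Sum>k=1..r. int (m k) + (if k = i then 1 else 0))"
    by (intro sum.cong) auto
  then show ?thesis using i by (simp add: sum.distrib)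
qed

lemma engel_step_move_count:
  "step (c, m, b) (c', m', b') \<Longrightarrow> move_count (c', m', b') = move_count (c, m, b) + 1"
  using engel_step_effect[of c m b c' m' b'] sum_fun_upd_Suc by auto

lemma reachable_balance:
  assumes "reachable (c, m, b)" and j: "j \<in> {1..r}"
  shows "int (c j) + net_outflow m j
    = int (critical_loading r rv u j) + (if j = u then added_chips (c, m, b) else 0)"
proof (cases "j = u")
  case True
  then show ?thesis by (simp add: critical_loading_start)
next
  case False
  from assms(1) show ?thesis
  proof (induction "(c, m, b)" arbitrary: c m b rule: reachable_induct)
    case init
    then show ?case using False by (auto simp: init_state_def net_outflow_def)
  next
    case (step c m b c' m' b')
    then show ?case
      using False j move1_balance[of _ c m b c' m' b' j] move2_balance[of c m b c' m' b' j]
      unfolding engel_step_def by auto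
  qed
qed

lemma reachable_added_chips:
  "reachable (c, m, b) \<Longrightarrow> 0 \<le> added_chips (c, m, b) \<and> (b \<longrightarrow> 1 \<le> added_chips (c, m, b))"
proof (induction "(c, m, b)" arbitrary: c m b rule: reachable_induct)
  case init
  then show ?case using added_chips_init by (auto simp: init_state_def)
next
  case (step c m b c' m' b')
  then show ?case using engel_step_effect[of c m b c' m' b'] by auto
qed

lemma move1_transient_chips_le:
  assumes "move1 s r rv rm i (c, m, b) (c', m', b')"
  shows "(\<Sum>j=1..r. c' j) \<le> (\<Sum>j=1..r. c j)"
proof -
  have i: "i \<in> {1..r}"
    and c': "\<forall>j\<in>{1..r}. int (c' j) = int (c j) - (if j = i then int (rv i) else 0) + int (rm i j)"
    using assms transient_le_states unfolding move1_def by (auto simp: of_nat_diff)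
  have "(\<Sum>j=1..r. rm i j) \<le> rv i"
    using rm_row_sum[OF i] sum_states_split[of "rm i"] by linarith
  then have "(\<Sum>j=1..r. int (c j) - (if j = i then int (rv i) else 0) + int (rm i j)) \<le> (\<Sum>j=1..r. int (c j))"
    using i by (simp add: sum.distrib sum_subtractf flip: of_nat_sum)
  moreover have "(\<Sum>j=1..r. int (c' j)) = (\<Sum>j=1..r. int (c j) - (if j = i then int (rv i) else 0) + int (rm i j))"
    using c' by (intro sum.cong) auto
  ultimately show ?thesis by (simp flip: of_nat_sum)
qed

lemma reachable_chips_bounded:
  "reachable (c, m, b) \<Longrightarrow> (\<Sum>j=1..r. c j) \<le> (\<Sum>j=1..r. rv j)"
proof (induction "(c, m, b)" arbitrary: c m b rule: reachable_induct)
  case init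
  then show ?case by (auto simp: init_state_def critical_loading_def intro: sum_mono)
next
  case (step c m b c' m' b')
  then consider i where "move1 s r rv rm i (c, m, b) (c', m', b')" | "move2 r rv u (c, m, b) (c', m', b')"
    unfolding engel_step_def by blast
  then show ?case
  proof cases
    case 1
    then show ?thesis using move1_transient_chips_le step.hyps(3) by (meson order_trans)
  next
    case 2
    then have "\<forall>j\<in>{1..r}. c' j \<le> rv j" unfolding move2_def by auto
    then show ?thesis by (intro sum_mono) auto
  qed
qed

lemma engel_step_exists: "\<not> stopped r rv u \<sigma> \<Longrightarrow> \<exists>\<sigma>'. step \<sigma> \<sigma>'"
proof -
  assume not_stopped: "\<not> stopped r rv u \<sigma>"
  obtain c m b where \<sigma>: "\<sigma> = (c, m, b)" by (cases \<sigma>) auto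
  show ?thesis
  proof (cases "\<exists>i\<in>{1..r}. rv i \<le> c i")
    case True
    then obtain i where "i \<in> {1..r}" "rv i \<le> c i" by blast
    then have "move1 s r rv rm i \<sigma> ((\<lambda>j. c j - (if j = i then rv i else 0) + (if j \<in> {1..s} then rm i j else 0)),
        m(i := m i + 1), False)" unfolding move1_def \<sigma> by auto
    then show ?thesis using not_stopped unfolding engel_step_def by blast
  next
    case False
    then have "move2 r rv u \<sigma> (c(u := c u + 1), m, True)" unfolding move2_def \<sigma> by auto
    then show ?thesis using not_stopped unfolding engel_step_def by blast
  qed
qed

definition balanced :: "(nat \<Rightarrow> nat) \<Rightarrow> int \<Rightarrow> bool" where
  "balanced x t \<longleftrightarrow> (\<forall>j\<in>{1..r}. net_outflow x j = (if j = u then t else 0))"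

lemma fireable_below_balanced:
  assumes x: "balanced x t"
    and reach: "reachable (c, m, b)" and below: "\<forall>k\<in>{1..r}. m k \<le> x k"
    and added: "added_chips (c, m, b) < t"
    and i: "i \<in> {1..r}" and loaded: "rv i \<le> c i"
  shows "m i < x i"
proof (rule ccontr)
  assume "\<not> m i < x i"
  then have "m i = x i" using below i by force
  then have "net_outflow (\<lambda>k. x k - m k) i \<le> 0"
    unfolding net_outflow_def by (simp add: sum_nonneg)
  then have "net_outflow x i \<le> net_outflow m i" using net_outflow_diff[OF below i] by simp
  then have "int (c i) \<le> int (critical_loading r rv u i) + (if i = u then added_chips (c, m, b) - t else 0)"
    using reachable_balance[OF reach i] x i unfolding balanced_def by auto
  also have "\<dots> < int (rv i)"
    using added i rv_pos[OF i] unfolding critical_loading_def by (auto simp: of_nat_diff)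
  finally show False using loaded by simp
qed

lemma balanced_addition_restores_critical_loading:
  assumes x: "balanced x t"
    and reach: "reachable (c, m, b)" and below: "\<forall>k\<in>{1..r}. m k \<le> x k"
    and last: "added_chips (c, m, b) + 1 = t"
    and unloaded: "\<forall>i\<in>{1..r}. c i < rv i"
  shows "critical_on_transient r rv u (c(u := c u + 1))"
proof -
  define y where "y k = x k - m k" for k
  have y: "net_outflow y j = int (c j) + (if j = u then 1 else 0) - int (critical_loading r rv u j)"
    if j: "j \<in> {1..r}" for j
  proof -
    have "net_outflow y j = net_outflow x j - net_outflow m j"
      using net_outflow_diff[OF below j] unfolding y_def .
    then show ?thesis
      using reachable_balance[OF reach j] x j last unfolding balanced_def
      by (cases "j = u") (simp_all del: added_chips.simps)
  qed
  have "net_outflow y j \<le> 0" if j: "j \<in> {1..r}" for j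
    using y[OF j] unloaded[rule_format, OF j] j unfolding critical_loading_def by (cases "j = u") auto
  then have "\<forall>j\<in>{1..r}. y j = 0" by (intro net_outflow_nonpos_eq_0) blast
  then have "(c(u := c u + 1)) j = critical_loading r rv u j" if "j \<in> {1..r}" for j
  proof -
    have "int (c j) + (if j = u then 1 else 0) = int (critical_loading r rv u j)"
      using y[OF that] \<open>\<forall>j\<in>{1..r}. y j = 0\<close> that unfolding net_outflow_def by simp
    then show ?thesis by (cases "j = u") simp_all
  qed
  then show ?thesis unfolding critical_on_transient_def critical_loading_def by auto
qed

lemma reachable_below_balanced_vector:
  assumes x: "balanced x t" and t: "1 \<le> t"
    and "reachable (c, m, b)"
  shows "added_chips (c, m, b) \<le> t \<and> (\<forall>k\<in>{1..r}. m k \<le> x k)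
    \<and> (added_chips (c, m, b) = t \<longrightarrow> stopped r rv u (c, m, b))"
  using assms(3)
proof (induction "(c, m, b)" arbitrary: c m b rule: reachable_induct)
  case init
  then show ?case using added_chips_init t by (auto simp: init_state_def)
next
  case (step c m b c' m' b')
  then have below: "\<forall>k\<in>{1..r}. m k \<le> x k" and added: "added_chips (c, m, b) < t"
    unfolding engel_step_def by fastforce+
  from step.hyps(2) consider i where "move1 s r rv rm i (c, m, b) (c', m', b')"
    | "move2 r rv u (c, m, b) (c', m', b')"
    unfolding engel_step_def by blast
  then show ?case
  proof cases
    case 1
    then have "m i < x i" "m' = m(i := Suc (m i))" "\<not> b'"
      using fireable_below_balanced[OF x step.hyps(1) below added] unfolding move1_def by auto
    then show ?thesis
      using below added engel_step_effect[OF step.hyps(2)] by auto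
  next
    case 2
    then have "m' = m" "b'" "c' = c(u := c u + 1)" "\<forall>i\<in>{1..r}. c i < rv i"
      unfolding move2_def by auto
    then show ?thesis
      using below added engel_step_effect[OF step.hyps(2)] step.hyps(1)
        balanced_addition_restores_critical_loading[OF x step.hyps(1) below]
      by (auto simp: stopped_def)
  qed
qed

lemma recurrence_balanced_vector:
  assumes reach: "reachable (c, m, b)" "reachable (c', m', b')"
    and same_chips: "\<forall>j\<in>{1..r}. c j = c' j" and mono: "\<forall>k\<in>{1..r}. m k \<le> m' k"
    and later: "move_count (c, m, b) < move_count (c', m', b')"
  obtains x t where "balanced x t" and "1 \<le> t"
proof -
  define x where "x k = m' k - m k" for k
  define t where "t = added_chips (c', m', b') - added_chips (c, m, b)"
  have x: "balanced x t"
    unfolding balanced_def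
  proof
    fix j assume j: "j \<in> {1..r}"
    show "net_outflow x j = (if j = u then t else 0)"
      using net_outflow_diff[OF mono j] reachable_balance[OF reach(1) j] reachable_balance[OF reach(2) j]
        same_chips j unfolding x_def t_def by (cases "j = u") (simp_all del: added_chips.simps)
  qed
  have "1 \<le> t"
  proof (rule ccontr)
    assume "\<not> 1 \<le> t"
    then have "\<forall>k\<in>{1..r}. x k = 0"
      using x unfolding balanced_def by (intro net_outflow_nonpos_eq_0) auto
    then have "(\<Sum>k=1..r. int (m' k)) = (\<Sum>k=1..r. int (m k))"
      using mono unfolding x_def by (intro sum.cong) force+
    then have "move_count (c', m', b') - move_count (c, m, b) = t"
      unfolding t_def by (simp del: added_chips.simps)
    then show False using later \<open>\<not> 1 \<le> t\<close> by simp
  qed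
  then show ?thesis using that x by blast
qed

lemma move_count_bounded:
  assumes x: "balanced x t" and t: "1 \<le> t"
    and reach: "reachable (c, m, b)"
  shows "move_count (c, m, b) \<le> t + (\<Sum>k=1..r. int (x k))"
proof -
  have "added_chips (c, m, b) \<le> t" "\<forall>k\<in>{1..r}. m k \<le> x k"
    using reachable_below_balanced_vector[OF x t reach] by auto
  then show ?thesis by (simp del: added_chips.simps) (intro add_mono sum_mono, auto)
qed

lemma no_infinite_run: "\<not> (\<exists>f. f 0 = init_state r rv u \<and> (\<forall>n. step (f n) (f (Suc n))))"
proof
  assume "\<exists>f. f 0 = init_state r rv u \<and> (\<forall>n. step (f n) (f (Suc n)))"
  then obtain f where f0: "f 0 = init_state r rv u" and run: "\<And>n. step (f n) (f (Suc n))"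
    by blast
  define C M B where "C n = fst (f n)" and "M n = fst (snd (f n))" and "B n = snd (snd (f n))" for n
  have f: "f n = (C n, M n, B n)" for n unfolding C_def M_def B_def by simp
  have reach: "reachable (C n, M n, B n)" for n
  proof (induction n)
    case 0 then show ?case using f0 f[of 0] by simp
  next
    case (Suc n) then show ?case using run[of n] f by (metis rtranclp.rtrancl_into_rtrancl)
  qed
  have count: "move_count (C n, M n, B n) = int n" for n
  proof (induction n)
    case 0 then show ?case using f0 f[of 0] added_chips_init by (simp add: init_state_def)
  next
    case (Suc n)
    then show ?case using engel_step_move_count[OF run[of n, unfolded f]] by (simp del: move_count.simps)
  qed
  obtain p q where "p < q" and same_chips: "\<forall>j\<in>{1..r}. C p j = C q j"
  proof (rule bounded_sequence_repeats[of "{1..r}" C "\<Sum>j=1..r. rv j"])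
    show "C n j \<le> (\<Sum>j=1..r. rv j)" if "j \<in> {1..r}" for n j
      using member_le_sum[of j "{1..r}" "C n"] that reachable_chips_bounded[OF reach[of n]] by simp
  qed auto
  have "M n \<le> M (Suc n)" for n using engel_step_firings_mono run[of n, unfolded f] .
  then have "M p \<le> M q" using lift_Suc_mono_le[of M] \<open>p < q\<close> by simp
  then have "\<forall>k\<in>{1..r}. M p k \<le> M q k" by (simp add: le_fun_def)
  moreover have "move_count (C p, M p, B p) < move_count (C q, M q, B q)"
    using count \<open>p < q\<close> by simp
  ultimately obtain x t where x: "balanced x t" "1 \<le> t"
    using recurrence_balanced_vector[OF reach reach same_chips] by blast
  define n where "n = nat (t + (\<Sum>k=1..r. int (x k))) + 1"
  show False using move_count_bounded[OF x reach[of n]] count[of n] unfolding n_def by linarith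
qed

lemma stopped_balanced:
  assumes reach: "reachable (c, m, b)" and stop: "stopped r rv u (c, m, b)"
  defines "v \<equiv> \<Sum>k=r+1..s. chips_into r rm m k"
  shows "0 < v" and "balanced m (int v)"
proof -
  have "b" and "\<forall>j\<in>{1..r}. c j = critical_loading r rv u j"
    using stop unfolding stopped_def critical_on_transient_def critical_loading_def by auto
  then have "1 \<le> added_chips (c, m, b)"
    and outflow: "\<forall>j\<in>{1..r}. net_outflow m j = (if j = u then added_chips (c, m, b) else 0)"
    using reachable_added_chips[OF reach] reachable_balance[OF reach] by auto
  moreover have "int v = added_chips (c, m, b)"
    using sum_net_outflow[of m] outflow start unfolding v_def by (simp del: added_chips.simps)
  ultimately show "0 < v" and "balanced m (int v)"
    unfolding balanced_def by (simp_all del: added_chips.simps)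
qed

lemma weighted_transition:
  "k \<in> {1..r} \<Longrightarrow> j \<in> {1..s} \<Longrightarrow> real (rv k * m k) / v * P k j = real (m k * rm k j) / v"
  using transition_eq[of k j] rv_pos[of k] by simp

lemma visit_weights_equation:
  assumes outflow: "balanced m (int v)" and v: "0 < v"
    and j: "j \<in> {1..r}"
  shows "real (rv j * m j) / real v = (if j = u then 1 else 0) + (\<Sum>k=1..r. real (rv k * m k) / real v * P k j)"
proof -
  have "int (rv j * m j) = int ((if j = u then v else 0) + (\<Sum>k=1..r. m k * rm k j))"
    using outflow[unfolded balanced_def, rule_format, OF j] unfolding net_outflow_def
    by (auto simp: of_nat_sum)
  then have "real (rv j * m j) = (if j = u then real v else 0) + (\<Sum>k=1..r. real (m k * rm k j))"
    unfolding of_nat_eq_iff by (simp add: of_nat_sum del: of_nat_mult)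
  moreover have "(\<Sum>k=1..r. real (rv k * m k) / real v * P k j) = (\<Sum>k=1..r. real (m k * rm k j)) / real v"
    unfolding sum_divide_distrib using j transient_le_states
    by (intro sum.cong refl weighted_transition) auto
  ultimately show ?thesis using v by (simp add: field_simps)
qed

lemma stopped_state_limits:
  assumes reach: "reachable (c, m, b)" and stop: "stopped r rv u (c, m, b)"
  defines "v \<equiv> \<Sum>k=r+1..s. chips_into r rm m k"
  shows "0 < v"
    and "\<forall>j\<in>{1..r}. (\<lambda>n. matpow s P n u j) sums (real (rv j * m j) / real v)"
    and "\<forall>k\<in>{r+1..s}. (\<lambda>n. matpow s P n u k) \<longlonglongrightarrow> real (chips_into r rm m k) / real v"
proof -
  show v: "0 < v"
    using stopped_balanced(1)[OF reach stop] unfolding v_def .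
  have outflow: "balanced m (int v)"
    using stopped_balanced(2)[OF reach stop] unfolding v_def .
  show visits: "\<forall>j\<in>{1..r}. (\<lambda>n. matpow s P n u j) sums (real (rv j * m j) / real v)"
  proof (rule ballI, rule expected_visits_sums)
    show "\<forall>j\<in>{1..r}. real (rv j * m j) / real v
        = (if j = u then 1 else 0) + (\<Sum>k=1..r. real (rv k * m k) / real v * P k j)"
      using visit_weights_equation[OF outflow v] by blast
  qed simp_all
  show "\<forall>k\<in>{r+1..s}. (\<lambda>n. matpow s P n u k) \<longlonglongrightarrow> real (chips_into r rm m k) / real v"
  proof
    fix k assume k: "k \<in> {r+1..s}"
    have "(\<Sum>l=1..r. real (rv l * m l) / real v * P l k) = real (chips_into r rm m k) / real v"
      using k unfolding chips_into_def sum_divide_distrib of_nat_sum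
      by (intro sum.cong refl weighted_transition) auto
    then show "(\<lambda>n. matpow s P n u k) \<longlonglongrightarrow> real (chips_into r rm m k) / real v"
      using absorption_tendsto[OF start k visits] by simp
  qed
qed

end

theorem mainTheorem1:
  fixes s r u :: nat and P :: "nat \<Rightarrow> nat \<Rightarrow> real"
    and rv :: "nat \<Rightarrow> nat" and rm :: "nat \<Rightarrow> nat \<Rightarrow> nat"
  assumes chain: "absorbing_chain s r P"
    and rat: "\<forall>i\<in>{1..r}. 0 < rv i \<and> (\<forall>j\<in>{1..s}. P i j = real (rm i j) / real (rv i))"
    and u: "u \<in> {1..r}"
  shows "\<not> (\<exists>f. f 0 = init_state r rv u \<and> (\<forall>n. engel_step s r rv rm u (f n) (f (Suc n))))
    \<and> (\<forall>\<sigma>. (engel_step s r rv rm u)\<^sup>*\<^sup>* (init_state r rv u) \<sigma> \<longrightarrow>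
           \<not> (\<exists>\<sigma>'. engel_step s r rv rm u \<sigma> \<sigma>') \<longrightarrow> stopped r rv u \<sigma>)
    \<and> (\<forall>c m b. (engel_step s r rv rm u)\<^sup>*\<^sup>* (init_state r rv u) (c, m, b)
           \<and> stopped r rv u (c, m, b) \<longrightarrow>
          (let vu = (\<Sum>k=r+1..s. chips_into r rm m k) in
            0 < vu
            \<and> (\<forall>j\<in>{1..r}. (\<lambda>n. matpow s P n u j) sums (real (rv j * m j) / real vu))
            \<and> (\<forall>k\<in>{r+1..s}. (\<lambda>n. matpow s P n u k) \<longlonglongrightarrow> real (chips_into r rm m k) / real vu)))"
proof -
  interpret engel_procedure s r P rv rm u
    using assms by unfold_locales
  show ?thesis
    using no_infinite_run engel_step_exists stopped_state_limits unfolding Let_def by blast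
qed

end
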